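(* Let $H=\{h_1,h_2,h_3\}$ with $\kappa_{h}=2$ for all $h\in H$, $D=\{f,m,s_1,s_2,s_3,s_4\}$ with single doctors $S=\{s_1,s_2,s_3,s_4\}$ and unique couple $c=\{f,m\}$. Suppose the hospitals' preferences over individual doctors are (best first, $\emptyset$ last): $\tilde P_{h_1}: s_3,s_4,s_1,f,m,s_2$; $\tilde P_{h_2}: s_4,s_3,f,m,s_1,s_2$; $\tilde P_{h_3}: s_3,s_4,m,f,s_1,s_2$, with each $P_h$ an arbitrary responsive extension of $\tilde P_h$ to feasible sets. Suppose the doctors' preferences are (best first, $\emptyset$ last): $P_{s_1}: h_2,h_1,h_3$; $P_{s_2}: h_3,h_1,h_2$; $P_{s_3}: h_1,h_2,h_3$; $P_{s_4}: h_2,h_1,h_3$; $P_f: h_1,h_3,h_2$; $P_m: h_2,h_1,h_3$; and the couple's preference $P_c$ ranks $(h_1,h_2),(h_1,h_1),(h_1,h_3),(h_3,h_3),(h_3,h_2),(h_3,h_1),(h_2,h_2),(h_2,h_1),(h_2,h_3)$ in this order, followed by all pairs in $\bar H^2\setminus H^2$ (in any order). Then no stable matching exists at this preference profile.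
   Context: Standing model. Let $H$ be a finite set of hospitals with $|H|\ge 2$; each $h\in H$ has a capacity $\kappa_h\in\mathbb{N}$ with $\kappa_h\ge 2$. Write $\bar H=H\cup\{\emptyset\}$, where being assigned $\emptyset$ means being unmatched. The finite set of doctors is $D=F\cup M\cup S$ (pairwise disjoint), with $F=\{f_1,\dots,f_k\}$, $M=\{m_1,\dots,m_k\}$, $k\ge 1$; the set of couples is $C=\{\{f_1,m_1\},\dots,\{f_k,m_k\}\}$, and doctors in $S$ are called single doctors. Assume $|D|\ge 4$ and $\sum_{h\in H}\kappa_h=|D|$. A matching is a map $\mu$ assigning to each $h\in H$ a set $\mu(h)\subseteq D$ with $|\mu(h)|\le\kappa_h$ and to each doctor $d$ an element $\mu(d)\in\bar H$, such that $\mu(d)=h$ iff $d\in\mu(h)$; for a couple $c=\{f,m\}$ write $\mu(c)=(\mu(f),\mu(m))$. For a set $X$, $\mathbb{L}(X)$ is the set of strict linear orders (preferences) on $X$; for a preference $P$, $R$ denotes its reflexive version ($xRy$ iff $x=y$ or $xPy$), and $r_1(P)$ its top element. Each hospital $h$ has a preference $\tilde P_h\in\mathbb{L}(D\cup\{\emptyset\})$ over individual doctors with $d\,\tilde P_h\,\emptyset$ for all $d\in D$, and a preference $P_h$ over the feasible sets $\{D'\subseteq D:|D'|\le\kappa_h\}$ that is responsive with respect to $\tilde P_h$: (i) on singletons and $\emptyset$, $P_h$ agrees with $\tilde P_h$; (ii) for all $D'\subsetneq D$ and all $D_1,D_2\subseteq D\setminus D'$ with $|D'\cup D_1|\le\kappa_h$,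 $|D'\cup D_2|\le\kappa_h$: $(D'\cup D_1)\,P_h\,(D'\cup D_2)$ iff $D_1\,P_h\,D_2$. Each doctor $d\in D$ has a preference $P_d\in\mathbb{L}(\bar H)$ with $h\,P_d\,\emptyset$ for all $h\in H$. Each couple $c=\{f,m\}$ has a preference $P_c\in\mathbb{L}(\bar H^2)$, where the pair $(h,h')$ means $f$ is assigned $h$ and $m$ is assigned $h'$; every pair in $H^2$ is preferred under $P_c$ to every pair in $\bar H^2\setminus H^2$. A preference profile consists of such preferences for all doctors, all couples and all hospitals. Blocking and stability. At a matching $\mu$, hospital $h$ is interested in a set $D'\subseteq D$ if there is $D''\subseteq\mu(h)$ with $|(\mu(h)\setminus D'')\cup D'|\le\kappa_h$ and $((\mu(h)\setminus D'')\cup D')\,P_h\,\mu(h)$. A pair $(h,s)$ with $h\in H$, $s\in S$ blocks $\mu$ if $h\,P_s\,\mu(s)$ and $h$ is interested in $\{s\}$. For a couple $c=\{f,m\}$ and $h_f,h_m\in H$, $((h_f,h_m),c)$ blocks $\mu$ if $(h_f,h_m)\,P_c\,\mu(c)$ and: (i) if $h_f\ne h_m$, $\mu(f)\ne h_f$ and $\mu(m)\ne h_m$, then $h_f$ is interested in $\{f\}$ and $h_m$ is interested in $\{m\}$; (ii) if $h_f\ne h_m$ and, for $\{x,y\}=\{f,m\}$, $\mu(x)=h_x$ and $\mu(y)\neq h_y$, then $h_y$ is interested in $\{y\}$; (iii) if $h_f=h_m=h$, then $h$ is interested in $\{f,m\}$. A matching is stable if it is blocked by no such pair. *)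

theory Defs
  imports Main
begin

text \<open>The hospital set H is UNIV :: 'h set, the doctor set D is UNIV :: 'd set.
  An assignment to a doctor is a 'h option, None meaning unmatched (the empty hospital).
  Strict preferences are binary predicates P x y meaning "x is strictly preferred to y".\<close>

definition strict_linear_on :: "'a set \<Rightarrow> ('a \<Rightarrow> 'a \<Rightarrow> bool) \<Rightarrow> bool" where
  "strict_linear_on A P \<longleftrightarrow>
     (\<forall>x y. P x y \<longrightarrow> x \<in> A \<and> y \<in> A) \<and>
     (\<forall>x\<in>A. \<not> P x x) \<and>
     (\<forall>x\<in>A. \<forall>y\<in>A. \<forall>z\<in>A. P x y \<and> P y z \<longrightarrow> P x z) \<and>
     (\<forall>x\<in>A. \<forall>y\<in>A. x \<noteq> y \<longrightarrow> P x y \<or> P y x)"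

definition list_pref :: "'a list \<Rightarrow> 'a \<Rightarrow> 'a \<Rightarrow> bool" where
  "list_pref xs a b \<longleftrightarrow> (\<exists>i j. i < j \<and> j < length xs \<and> xs ! i = a \<and> xs ! j = b)"

definition feasible :: "('h \<Rightarrow> nat) \<Rightarrow> 'h \<Rightarrow> 'd set set" where
  "feasible kappa h = {X. finite X \<and> card X \<le> kappa h}"

definition responsive ::
  "('h \<Rightarrow> nat) \<Rightarrow> ('h \<Rightarrow> 'd option \<Rightarrow> 'd option \<Rightarrow> bool)
   \<Rightarrow> ('h \<Rightarrow> 'd set \<Rightarrow> 'd set \<Rightarrow> bool) \<Rightarrow> 'h \<Rightarrow> bool" where
  "responsive kappa tP PH h \<longleftrightarrow>
     (\<forall>d d'. PH h {d} {d'} \<longleftrightarrow> tP h (Some d) (Some d')) \<and>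
     (\<forall>d. PH h {d} {} \<longleftrightarrow> tP h (Some d) None) \<and>
     (\<forall>d. PH h {} {d} \<longleftrightarrow> tP h None (Some d)) \<and>
     (\<forall>D' D1 D2. D' \<subset> UNIV \<and> D1 \<subseteq> - D' \<and> D2 \<subseteq> - D'
        \<and> D' \<union> D1 \<in> feasible kappa h \<and> D' \<union> D2 \<in> feasible kappa h
        \<longrightarrow> (PH h (D' \<union> D1) (D' \<union> D2) \<longleftrightarrow> PH h D1 D2))"

definition assigned :: "('d \<Rightarrow> 'h option) \<Rightarrow> 'h \<Rightarrow> 'd set" where
  "assigned mu h = {d. mu d = Some h}"

definition is_matching :: "('h \<Rightarrow> nat) \<Rightarrow> ('d \<Rightarrow> 'h option) \<Rightarrow> bool" where
  "is_matching kappa mu \<longleftrightarrow> (\<forall>h. card (assigned mu h) \<le> kappa h)"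

definition interested ::
  "('h \<Rightarrow> nat) \<Rightarrow> ('h \<Rightarrow> 'd set \<Rightarrow> 'd set \<Rightarrow> bool) \<Rightarrow> ('d \<Rightarrow> 'h option) \<Rightarrow> 'h \<Rightarrow> 'd set \<Rightarrow> bool" where
  "interested kappa PH mu h D' \<longleftrightarrow>
     (\<exists>D''. D'' \<subseteq> assigned mu h \<and>
        card ((assigned mu h - D'') \<union> D') \<le> kappa h \<and>
        PH h ((assigned mu h - D'') \<union> D') (assigned mu h))"

definition single_blocks ::
  "('h \<Rightarrow> nat) \<Rightarrow> ('h \<Rightarrow> 'd set \<Rightarrow> 'd set \<Rightarrow> bool) \<Rightarrow> ('d \<Rightarrow> 'h option \<Rightarrow> 'h option \<Rightarrow> bool)
   \<Rightarrow> ('d \<Rightarrow> 'h option) \<Rightarrow> 'h \<Rightarrow> 'd \<Rightarrow> bool" where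
  "single_blocks kappa PH Pd mu h s \<longleftrightarrow>
     Pd s (Some h) (mu s) \<and> interested kappa PH mu h {s}"

definition couple_blocks ::
  "('h \<Rightarrow> nat) \<Rightarrow> ('h \<Rightarrow> 'd set \<Rightarrow> 'd set \<Rightarrow> bool)
   \<Rightarrow> ('h option \<times> 'h option \<Rightarrow> 'h option \<times> 'h option \<Rightarrow> bool)
   \<Rightarrow> ('d \<Rightarrow> 'h option) \<Rightarrow> 'h \<Rightarrow> 'h \<Rightarrow> 'd \<Rightarrow> 'd \<Rightarrow> bool" where
  "couple_blocks kappa PH Pcpl mu hf hm f m \<longleftrightarrow>
     Pcpl (Some hf, Some hm) (mu f, mu m) \<and>
     (hf \<noteq> hm \<and> mu f \<noteq> Some hf \<and> mu m \<noteq> Some hm \<longrightarrow>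
        interested kappa PH mu hf {f} \<and> interested kappa PH mu hm {m}) \<and>
     (hf \<noteq> hm \<and> mu f = Some hf \<and> mu m \<noteq> Some hm \<longrightarrow> interested kappa PH mu hm {m}) \<and>
     (hf \<noteq> hm \<and> mu m = Some hm \<and> mu f \<noteq> Some hf \<longrightarrow> interested kappa PH mu hf {f}) \<and>
     (hf = hm \<longrightarrow> interested kappa PH mu hf {f, m})"

text \<open>Stability; S is the set of single doctors, C the set of couples (f, m),
  Pc (f, m) the preference of couple (f, m).\<close>
definition stable ::
  "('h \<Rightarrow> nat) \<Rightarrow> ('h \<Rightarrow> 'd set \<Rightarrow> 'd set \<Rightarrow> bool) \<Rightarrow> ('d \<Rightarrow> 'h option \<Rightarrow> 'h option \<Rightarrow> bool)
   \<Rightarrow> ('d \<times> 'd \<Rightarrow> 'h option \<times> 'h option \<Rightarrow> 'h option \<times> 'h option \<Rightarrow> bool)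
   \<Rightarrow> 'd set \<Rightarrow> ('d \<times> 'd) set \<Rightarrow> ('d \<Rightarrow> 'h option) \<Rightarrow> bool" where
  "stable kappa PH Pd Pc S C mu \<longleftrightarrow>
     is_matching kappa mu \<and>
     (\<forall>h. \<forall>s\<in>S. \<not> single_blocks kappa PH Pd mu h s) \<and>
     (\<forall>(f, m)\<in>C. \<forall>hf hm. \<not> couple_blocks kappa PH (Pc (f, m)) mu hf hm f m)"

datatype hosp = H1 | H2 | H3
datatype doc = F | M | S1 | S2 | S3 | S4

fun hosp_rank :: "hosp \<Rightarrow> doc option list" where
  "hosp_rank H1 = [Some S3, Some S4, Some S1, Some F, Some M, Some S2, None]"
| "hosp_rank H2 = [Some S4, Some S3, Some F, Some M, Some S1, Some S2, None]"
| "hosp_rank H3 = [Some S3, Some S4, Some M, Some F, Some S1, Some S2, None]"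

fun doc_rank :: "doc \<Rightarrow> hosp option list" where
  "doc_rank S1 = [Some H2, Some H1, Some H3, None]"
| "doc_rank S2 = [Some H3, Some H1, Some H2, None]"
| "doc_rank S3 = [Some H1, Some H2, Some H3, None]"
| "doc_rank S4 = [Some H2, Some H1, Some H3, None]"
| "doc_rank F = [Some H1, Some H3, Some H2, None]"
| "doc_rank M = [Some H2, Some H1, Some H3, None]"

definition couple_rank :: "(hosp \<times> hosp) list" where
  "couple_rank = [(H1,H2),(H1,H1),(H1,H3),(H3,H3),(H3,H2),(H3,H1),(H2,H2),(H2,H1),(H2,H3)]"

end

theory Submission
  imports Defs
begin

(* S3 and S4 are the favourite doctors of H1 and H2 and rank these hospitals first, so a stable
   matching places S3 at H1 and S4 at H2; then S1 sits at H1 or H2, for otherwise it blocks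
   with H1. If S1 is at H2, then H2 would exchange S1 for m and H1 would take f, so the couple
   blocks with its favourite pair (H1, H2). If S1 is at H1, then f and m are not both at H3
   (else S1 blocks with H2), so H3, which prefers {f, m} to every other set it could hold,
   blocks together with the couple at (H3, H3), a pair the couple ranks above every pair
   not sending f to H1. *)

lemma list_pref_Nil [simp]: "\<not> list_pref [] a b"
  by (simp add: list_pref_def)

lemma list_pref_Cons [simp]:
  "list_pref (x # xs) a b \<longleftrightarrow> x = a \<and> b \<in> set xs \<or> list_pref xs a b"
proof
  assume "list_pref (x # xs) a b"
  then obtain i j where ij: "i < j" "j < length (x # xs)" "(x # xs) ! i = a" "(x # xs) ! j = b"
    unfolding list_pref_def by blast
  then obtain j' where j: "j = Suc j'"
    by (cases j) auto
  show "x = a \<and> b \<in> set xs \<or> list_pref xs a b"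
  proof (cases i)
    case 0
    then show ?thesis using ij j by auto
  next
    case (Suc i')
    then have "list_pref xs a b"
      using ij j unfolding list_pref_def by (intro exI[of _ i'] exI[of _ j']) auto
    then show ?thesis ..
  qed
next
  assume "x = a \<and> b \<in> set xs \<or> list_pref xs a b"
  then show "list_pref (x # xs) a b"
  proof
    assume "x = a \<and> b \<in> set xs"
    then obtain j where "j < length xs" "xs ! j = b" "x = a"
      by (auto simp: in_set_conv_nth)
    then show ?thesis
      unfolding list_pref_def by (intro exI[of _ 0] exI[of _ "Suc j"]) auto
  next
    assume "list_pref xs a b"
    then obtain i j where "i < j" "j < length xs" "xs ! i = a" "xs ! j = b"
      unfolding list_pref_def by blast
    then show ?thesis
      unfolding list_pref_def by (intro exI[of _ "Suc i"] exI[of _ "Suc j"]) auto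
  qed
qed

lemma list_pref_irrefl: "distinct xs \<Longrightarrow> \<not> list_pref xs a a"
  by (auto simp: list_pref_def nth_eq_iff_index_eq)

lemma UNIV_doc: "(UNIV :: doc set) = {F, M, S1, S2, S3, S4}"
  by (auto intro: doc.exhaust)

lemma finite_doc_set [simp]: "finite (X :: doc set)"
proof -
  have "finite (UNIV :: doc set)"
    by (simp add: UNIV_doc)
  then show ?thesis
    by (rule finite_subset[OF subset_UNIV])
qed

lemma strict_linear_on_trans:
  "strict_linear_on A P \<Longrightarrow> P x y \<Longrightarrow> P y z \<Longrightarrow> P x z"
  unfolding strict_linear_on_def by blast

lemma responsive_cancel:
  assumes "responsive kappa tP PH h" "D \<subset> UNIV" "D1 \<subseteq> - D" "D2 \<subseteq> - D"
    and "D \<union> D1 \<in> feasible kappa h" "D \<union> D2 \<in> feasible kappa h"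
  shows "PH h (D \<union> D1) (D \<union> D2) \<longleftrightarrow> PH h D1 D2"
  using assms unfolding responsive_def by blast

lemma responsive_add:
  assumes resp: "responsive kappa tP PH h" and "tP h (Some a) None"
    and "a \<notin> D" "finite D" "card D < kappa h"
  shows "PH h (insert a D) D"
proof -
  have "PH h (D \<union> {a}) (D \<union> {}) \<longleftrightarrow> PH h {a} {}"
    by (rule responsive_cancel[OF resp]) (use assms in \<open>auto simp: feasible_def\<close>)
  then show ?thesis using assms unfolding responsive_def by simp
qed

lemma responsive_swap:
  assumes resp: "responsive kappa tP PH h" and "tP h (Some a) (Some b)"
    and "a \<notin> D" "b \<notin> D" "finite D" "card D < kappa h"
  shows "PH h (insert a D) (insert b D)"
proof -
  have "PH h (D \<union> {a}) (D \<union> {b}) \<longleftrightarrow> PH h {a} {b}"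
    by (rule responsive_cancel[OF resp]) (use assms in \<open>auto simp: feasible_def\<close>)
  then show ?thesis using assms unfolding responsive_def by simp
qed

lemma interested_if_preferred_to_all_but_one:
  assumes resp: "responsive kappa tP PH h" and acceptable: "tP h (Some s) None"
    and s: "s \<notin> assigned mu h" and fin: "finite (assigned mu h)"
    and cap: "card (assigned mu h) \<le> kappa h" "2 \<le> kappa h"
    and worse: "\<forall>b \<in> assigned mu h - {x}. tP h (Some s) (Some b)"
  shows "interested kappa PH mu h {s}"
proof (cases "card (assigned mu h) < kappa h")
  case True
  have "PH h (insert s (assigned mu h)) (assigned mu h)"
    using responsive_add[OF resp acceptable s fin True] .
  moreover have "card (insert s (assigned mu h)) \<le> kappa h"
    using True fin by (simp add: card_insert_if)
  ultimately show ?thesis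
    unfolding interested_def by (intro exI[of _ "{}"]) simp
next
  case False
  then have "card (assigned mu h - {x}) \<noteq> 0"
    using cap fin by (auto simp: card_Diff_singleton_if)
  then have "assigned mu h - {x} \<noteq> {}"
    by (metis card.empty)
  then obtain b where b: "b \<in> assigned mu h" "b \<noteq> x"
    by blast
  define rest where "rest = assigned mu h - {b}"
  have rest: "s \<notin> rest" "b \<notin> rest" "finite rest" "card rest < kappa h"
    using b s cap fin False by (auto simp: rest_def card_Diff_singleton)
  have "tP h (Some s) (Some b)"
    using worse b by blast
  then have "PH h (insert s rest) (insert b rest)"
    using responsive_swap[OF resp _ rest] by blast
  moreover have "insert b rest = assigned mu h"
    using b by (auto simp: rest_def)
  moreover have "card (insert s rest) \<le> kappa h"
    using rest by simp
  ultimately show ?thesis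
    unfolding interested_def using b
    by (intro exI[of _ "{b}"]) (simp add: rest_def[symmetric] Un_commute)
qed

lemma responsive_prefers_pair:
  assumes resp: "responsive kappa tP PH h"
    and lin: "strict_linear_on (feasible kappa h) (PH h)" and cap: "2 \<le> kappa h"
    and distinct: "f \<noteq> m" "f \<noteq> d" "m \<noteq> d"
    and acceptable: "tP h (Some f) None" "tP h (Some m) None"
    and above: "tP h (Some f) (Some d)" "tP h (Some m) (Some d)"
    and A: "A \<subseteq> {f, m, d}" "\<not> {f, m} \<subseteq> A"
  shows "PH h {f, m} A"
proof -
  have "A \<in> Pow {f, m, d}"
    using A(1) by simp
  then have "A \<in> {{}, {f}, {m}, {d}, {f, d}, {m, d}}"
    using A(2) by (auto simp: Pow_insert)
  moreover have fm_f: "PH h {f, m} {f}" and fm_m: "PH h {f, m} {m}"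
    using responsive_add[OF resp acceptable(2), of "{f}"]
      responsive_add[OF resp acceptable(1), of "{m}"] distinct cap
    by (simp_all add: insert_commute)
  moreover have fm_fd: "PH h {f, m} {f, d}" and "PH h {f, m} {m, d}"
    using responsive_swap[OF resp above(2), of "{f}"]
      responsive_swap[OF resp above(1), of "{m}"] distinct cap
    by (simp_all add: insert_commute)
  moreover have "PH h {f, m} {}"
    using responsive_add[OF resp acceptable(1), of "{}"] fm_f strict_linear_on_trans[OF lin] cap
    by auto
  moreover have "PH h {f, m} {d}"
    using responsive_add[OF resp acceptable(1), of "{d}"] fm_fd strict_linear_on_trans[OF lin]
      distinct cap by auto
  ultimately show ?thesis
    by auto
qed

lemma hosp_rank_complete: "Some d \<in> set (hosp_rank h)"
  by (cases h; cases d) simp_all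

lemma hosp_rank_acceptable: "list_pref (hosp_rank h) (Some d) None"
  by (cases h; cases d) simp_all

lemma doc_rank_complete: "y \<in> set (doc_rank d)"
proof (cases y)
  case (Some h)
  then show ?thesis
    by (cases d; cases h) simp_all
qed (cases d; simp)

lemma distinct_doc_rank: "distinct (doc_rank d)"
  by (cases d) simp_all

lemma couple_rank_top: "(a, b) \<noteq> (H1, H2) \<Longrightarrow> list_pref couple_rank (H1, H2) (a, b)"
  by (cases a; cases b) (simp_all add: couple_rank_def)

lemma couple_rank_H3_H3:
  "a \<noteq> H1 \<Longrightarrow> (a, b) \<noteq> (H3, H3) \<Longrightarrow> list_pref couple_rank (H3, H3) (a, b)"
  by (cases a; cases b) (simp_all add: couple_rank_def)

locale stable_example_matching =
  fixes PH :: "hosp \<Rightarrow> doc set \<Rightarrow> doc set \<Rightarrow> bool"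
    and Pc :: "hosp option \<times> hosp option \<Rightarrow> hosp option \<times> hosp option \<Rightarrow> bool"
    and mu :: "doc \<Rightarrow> hosp option"
  assumes PH_linear: "\<And>h. strict_linear_on (feasible (\<lambda>_. 2) h) (PH h)"
    and PH_responsive: "\<And>h. responsive (\<lambda>_. 2) (\<lambda>h. list_pref (hosp_rank h)) PH h"
    and Pc_pairs: "\<And>a b a' b'. Pc (Some a, Some b) (Some a', Some b') \<longleftrightarrow>
                      list_pref couple_rank (a, b) (a', b')"
    and Pc_unmatched: "\<And>a b y. \<nexists>a' b'. y = (Some a', Some b') \<Longrightarrow> Pc (Some a, Some b) y"
    and stable: "stable (\<lambda>_. 2) PH (\<lambda>d. list_pref (doc_rank d)) (\<lambda>_. Pc)
                   {S1, S2, S3, S4} {(F, M)} mu"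
begin

lemma card_assigned_le: "card (assigned mu h) \<le> 2"
  using stable by (simp add: stable_def is_matching_def)

lemma assigned_eq_pair:
  assumes "mu a = Some h" "mu b = Some h" "a \<noteq> b"
  shows "assigned mu h = {a, b}"
proof -
  have "{a, b} \<subseteq> assigned mu h"
    using assms by (simp add: assigned_def)
  moreover have "card (assigned mu h) \<le> card {a, b}"
    using card_assigned_le[of h] assms(3) by simp
  ultimately show ?thesis
    using card_seteq[OF finite_doc_set] by metis
qed

lemma interested_in_single:
  assumes "mu d \<noteq> Some h"
    and "\<forall>b \<in> assigned mu h - {x}. list_pref (hosp_rank h) (Some d) (Some b)"
  shows "interested (\<lambda>_. 2) PH mu h {d}"
  using interested_if_preferred_to_all_but_one[OF PH_responsive hosp_rank_acceptable]
    card_assigned_le assms by (simp add: assigned_def)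

lemma single_not_preferring:
  assumes "s \<in> {S1, S2, S3, S4}"
    and "\<forall>b \<in> assigned mu h - {x}. list_pref (hosp_rank h) (Some s) (Some b)"
  shows "\<not> list_pref (doc_rank s) (Some h) (mu s)"
proof
  assume prefers: "list_pref (doc_rank s) (Some h) (mu s)"
  then have "mu s \<noteq> Some h"
    using list_pref_irrefl[OF distinct_doc_rank] by metis
  then have "single_blocks (\<lambda>_. 2) PH (\<lambda>d. list_pref (doc_rank d)) mu h s"
    unfolding single_blocks_def using prefers interested_in_single assms(2) by blast
  then show False
    using stable assms(1) unfolding stable_def by blast
qed

lemma couple_not_blocking: "\<not> couple_blocks (\<lambda>_. 2) PH Pc mu hf hm F M"
  using stable by (simp add: stable_def)

lemma couple_prefers:
  assumes "\<forall>a' b'. y = (Some a', Some b') \<longrightarrow> list_pref couple_rank (a, b) (a', b')"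
  shows "Pc (Some a, Some b) y"
proof (cases "\<exists>a' b'. y = (Some a', Some b')")
  case True
  then obtain a' b' where "y = (Some a', Some b')"
    by blast
  then show ?thesis
    using assms Pc_pairs by simp
next
  case False
  then show ?thesis
    by (rule Pc_unmatched)
qed

lemma S3_at_H1: "mu S3 = Some H1"
proof (rule ccontr)
  assume "mu S3 \<noteq> Some H1"
  then have "list_pref (doc_rank S3) (Some H1) (mu S3)"
    using doc_rank_complete[of "mu S3" S3] by simp
  moreover have "\<forall>b \<in> assigned mu H1 - {S3}. list_pref (hosp_rank H1) (Some S3) (Some b)"
    using hosp_rank_complete[of _ H1] by auto
  ultimately show False
    using single_not_preferring[of S3] by blast
qed

lemma S4_at_H2: "mu S4 = Some H2"
proof (rule ccontr)
  assume "mu S4 \<noteq> Some H2"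
  then have "list_pref (doc_rank S4) (Some H2) (mu S4)"
    using doc_rank_complete[of "mu S4" S4] by simp
  moreover have "\<forall>b \<in> assigned mu H2 - {S4}. list_pref (hosp_rank H2) (Some S4) (Some b)"
    using hosp_rank_complete[of _ H2] by auto
  ultimately show False
    using single_not_preferring[of S4] by blast
qed

lemma S1_at_H1_or_H2: "mu S1 = Some H1 \<or> mu S1 = Some H2"
proof (rule ccontr)
  assume elsewhere: "\<not> (mu S1 = Some H1 \<or> mu S1 = Some H2)"
  then have "list_pref (doc_rank S1) (Some H1) (mu S1)"
    using doc_rank_complete[of "mu S1" S1] by auto
  moreover have "\<forall>b \<in> assigned mu H1 - {S3}. list_pref (hosp_rank H1) (Some S1) (Some b)"
  proof
    fix b
    assume "b \<in> assigned mu H1 - {S3}"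
    then show "list_pref (hosp_rank H1) (Some S1) (Some b)"
      using elsewhere S4_at_H2 by (cases b) (auto simp: assigned_def)
  qed
  ultimately show False
    using single_not_preferring[of S1] by blast
qed

lemma S1_not_at_H2: "mu S1 \<noteq> Some H2"
proof
  assume S1: "mu S1 = Some H2"
  then have H2: "assigned mu H2 = {S4, S1}"
    using assigned_eq_pair S4_at_H2 by blast
  then have M: "mu M \<noteq> Some H2"
    by (auto simp: assigned_def)
  have "interested (\<lambda>_. 2) PH mu H2 {M}"
    using interested_in_single[OF M, of S4] H2 by simp
  moreover have "interested (\<lambda>_. 2) PH mu H1 {F}" if F: "mu F \<noteq> Some H1"
  proof (rule interested_in_single[OF F, of S3], intro ballI)
    fix b
    assume "b \<in> assigned mu H1 - {S3}"
    then show "list_pref (hosp_rank H1) (Some F) (Some b)"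
      using F S1 S4_at_H2 by (cases b) (auto simp: assigned_def)
  qed
  moreover have "Pc (Some H1, Some H2) (mu F, mu M)"
    by (rule couple_prefers) (use M couple_rank_top in auto)
  ultimately have "couple_blocks (\<lambda>_. 2) PH Pc mu H1 H2 F M"
    unfolding couple_blocks_def using M by auto
  then show False
    using couple_not_blocking by blast
qed

lemma S1_not_at_H1: "mu S1 \<noteq> Some H1"
proof
  assume S1: "mu S1 = Some H1"
  then have "assigned mu H1 = {S3, S1}"
    using assigned_eq_pair S3_at_H1 by blast
  then have F: "mu F \<noteq> Some H1"
    by (auto simp: assigned_def)
  show False
  proof (cases "mu F = Some H3 \<and> mu M = Some H3")
    case True
    have "\<forall>b \<in> assigned mu H2 - {S4}. list_pref (hosp_rank H2) (Some S1) (Some b)"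
    proof
      fix b
      assume "b \<in> assigned mu H2 - {S4}"
      then show "list_pref (hosp_rank H2) (Some S1) (Some b)"
        using True S1 S3_at_H1 by (cases b) (auto simp: assigned_def)
    qed
    then show False
      using single_not_preferring[of S1 H2] S1 by simp
  next
    case False
    have "assigned mu H3 \<subseteq> {F, M, S2}"
    proof
      fix d
      assume "d \<in> assigned mu H3"
      then show "d \<in> {F, M, S2}"
        using S1 S3_at_H1 S4_at_H2 by (cases d) (auto simp: assigned_def)
    qed
    moreover have "\<not> {F, M} \<subseteq> assigned mu H3"
      using False by (simp add: assigned_def)
    ultimately have "PH H3 {F, M} (assigned mu H3)"
      using responsive_prefers_pair[OF PH_responsive[of H3] PH_linear[of H3], of F M S2]
        hosp_rank_acceptable by simp
    then have "interested (\<lambda>_. 2) PH mu H3 {F, M}"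
      unfolding interested_def by (intro exI[of _ "assigned mu H3"]) simp
    moreover have "Pc (Some H3, Some H3) (mu F, mu M)"
      by (rule couple_prefers) (use F False couple_rank_H3_H3 in auto)
    ultimately have "couple_blocks (\<lambda>_. 2) PH Pc mu H3 H3 F M"
      unfolding couple_blocks_def by simp
    then show False
      using couple_not_blocking by blast
  qed
qed

end

theorem mainTheorem9:
  fixes PH :: "hosp \<Rightarrow> doc set \<Rightarrow> doc set \<Rightarrow> bool"
    and Pc :: "hosp option \<times> hosp option \<Rightarrow> hosp option \<times> hosp option \<Rightarrow> bool"
  assumes "\<forall>h. strict_linear_on (feasible (\<lambda>_. 2) h) (PH h)"
    and "\<forall>h. responsive (\<lambda>_. 2) (\<lambda>h. list_pref (hosp_rank h)) PH h"
    and "strict_linear_on UNIV Pc"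
    and "\<forall>a b a' b'. Pc (Some a, Some b) (Some a', Some b') \<longleftrightarrow>
                      list_pref couple_rank (a, b) (a', b')"
    and "\<forall>a b y. (\<nexists>a' b'. y = (Some a', Some b')) \<longrightarrow> Pc (Some a, Some b) y"
  shows "\<not> (\<exists>mu. stable (\<lambda>_. 2) PH (\<lambda>d. list_pref (doc_rank d)) (\<lambda>_. Pc)
                   {S1, S2, S3, S4} {(F, M)} mu)"
proof
  assume "\<exists>mu. stable (\<lambda>_. 2) PH (\<lambda>d. list_pref (doc_rank d)) (\<lambda>_. Pc)
                   {S1, S2, S3, S4} {(F, M)} mu"
  then obtain mu where "stable (\<lambda>_. 2) PH (\<lambda>d. list_pref (doc_rank d)) (\<lambda>_. Pc)
                   {S1, S2, S3, S4} {(F, M)} mu"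
    by blast
  then interpret stable_example_matching PH Pc mu
    using assms(1,2,4,5) by unfold_locales auto
  show False
    using S1_at_H1_or_H2 S1_not_at_H1 S1_not_at_H2 by blast
qed

end
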